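(* Let $\mathbb{C}_r$ be a robot configuration space with a distance function $d_r : \mathbb{C}_r \times \mathbb{C}_r \to \mathbb{R}^{\geq 0}$, let $\mathbb{B}$ be the space of virtual elastic bands with distance $d_b$, and assume the workspace is bounded, so that there is $D_{\max,b} > 0$ with $d_b(B_1,B_2) \le D_{\max,b}$ for all $B_1, B_2 \in \mathbb{B}$. On $\mathbb{C}_f = \mathbb{C}_r \times \mathbb{B}$ define $d_f$ by $d_f((q_r,B),(q_r',B'))^2 = d_r(q_r,q_r')^2 + \lambda_b\, d_b(B,B')^2$ for a fixed $\lambda_b > 0$. Let $\mathcal{V} \subset \mathbb{C}_f$ be a finite nonempty set and $q^{rand}_f = (q^{rand}_r, B^{rand}) \in \mathbb{C}_f$. Consider the procedure: (i) compute $D_{near,r}^2 = \min_{(q_r,B) \in \mathcal{V}} d_r(q^{rand}_r, q_r)^2$; (ii) set $D_{\max,f}^2 = D_{near,r}^2 + \lambda_b D_{\max,b}^2$; (iii) form $Q^{near}_f = \{ (q_r,B) \in \mathcal{V} : d_r(q_r, q^{rand}_r)^2 \le D_{\max,f}^2 \}$; (iv) return $\arg\min_{q_f \in Q^{near}_f} d_f(q_f, q^{rand}_f)$. Then this procedure is equivalent to a nearest neighbor search in the full configuration space, i.e. the returned element $q^{select}_f$ satisfies $d_f(q^{select}_f, q^{rand}_f) = \min_{q_f \in \mathcal{V}} d_f(q_f, q^{rand}_f)$.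
   Context: A virtual elastic band is a finite sequence of at most $N_b^{\max}$ points of the workspace $W \subset \mathbb{R}^3$. The band distance $d_b(B_1,B_2)$ is the Euclidean distance between the vectors in $\mathbb{R}^{3N_b^{\max}}$ formed by upsampling each band (by linear interpolation along the piecewise-linear curve through its points) to exactly $N_b^{\max}$ points. The workspace is bounded means there is $D_{\max,w}>0$ with $\|x-y\| \le D_{\max,w}$ for all $x,y \in W$, which guarantees the existence of the bound $D_{\max,b}$ on $d_b$. *)

theory Defs
  imports Main "HOL-Library.Library" Complex_Main
begin

definition d_f :: "('r \<Rightarrow> 'r \<Rightarrow> real) \<Rightarrow> ('b \<Rightarrow> 'b \<Rightarrow> real) \<Rightarrow> real
                   \<Rightarrow> 'r \<times> 'b \<Rightarrow> 'r \<times> 'b \<Rightarrow> real" where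
  "d_f dr db lam q q' = sqrt ((dr (fst q) (fst q'))\<^sup>2 + lam * (db (snd q) (snd q'))\<^sup>2)"

definition D_near_sq :: "('r \<Rightarrow> 'r \<Rightarrow> real) \<Rightarrow> ('r \<times> 'b) set \<Rightarrow> 'r \<times> 'b \<Rightarrow> real" where
  "D_near_sq dr V qrand = Min ((\<lambda>q. (dr (fst qrand) (fst q))\<^sup>2) ` V)"

definition D_max_f_sq :: "('r \<Rightarrow> 'r \<Rightarrow> real) \<Rightarrow> real \<Rightarrow> real \<Rightarrow> ('r \<times> 'b) set \<Rightarrow> 'r \<times> 'b \<Rightarrow> real" where
  "D_max_f_sq dr lam Dmaxb V qrand = D_near_sq dr V qrand + lam * Dmaxb\<^sup>2"

definition Q_near :: "('r \<Rightarrow> 'r \<Rightarrow> real) \<Rightarrow> real \<Rightarrow> real \<Rightarrow> ('r \<times> 'b) set \<Rightarrow> 'r \<times> 'b \<Rightarrow> ('r \<times> 'b) set" where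
  "Q_near dr lam Dmaxb V qrand =
     {q \<in> V. (dr (fst q) (fst qrand))\<^sup>2 \<le> D_max_f_sq dr lam Dmaxb V qrand}"

end

theory Submission
  imports Defs
begin

text \<open>Let \<open>q\<^sub>0 \<in> V\<close> realise \<open>D_near,r\<close> and let \<open>q\<^sub>m\<close> be a true nearest neighbour of
  \<open>q_rand\<close> for \<open>d_f\<close>. Then
  \<open>d_r(q\<^sub>m)\<^sup>2 \<le> d_f(q\<^sub>m)\<^sup>2 \<le> d_f(q\<^sub>0)\<^sup>2 \<le> D_near,r\<^sup>2 + \<lambda>\<^sub>b D_max,b\<^sup>2\<close>,
  so \<open>q\<^sub>m\<close> survives the pruning step. Minimising \<open>d_f\<close> over a subset of \<open>V\<close> that
  still contains a global minimiser yields a global minimiser.\<close>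

lemma is_arg_min_subset:
  fixes f :: "'a \<Rightarrow> 'b::linorder"
  assumes "Q \<subseteq> V" and "m \<in> Q" and "is_arg_min f (\<lambda>x. x \<in> V) m"
    and "is_arg_min f (\<lambda>x. x \<in> Q) s"
  shows "is_arg_min f (\<lambda>x. x \<in> V) s"
  using assms unfolding is_arg_min_linorder by (meson order_trans subsetD)

lemma is_arg_min_imp_Min_eq:
  fixes f :: "'a \<Rightarrow> 'b::linorder"
  assumes "finite V" and "is_arg_min f (\<lambda>x. x \<in> V) m"
  shows "f m = Min (f ` V)"
  using assms unfolding is_arg_min_linorder by (intro Min_eqI[symmetric]) auto

lemma d_f_sq:
  assumes "lam \<ge> 0"
  shows "(d_f dr db lam q q')\<^sup>2 = (dr (fst q) (fst q'))\<^sup>2 + lam * (db (snd q) (snd q'))\<^sup>2"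
  unfolding d_f_def using assms by simp

lemma D_near_sq_attained:
  assumes "finite V" and "V \<noteq> {}"
  obtains q0 where "q0 \<in> V" and "D_near_sq dr V qrand = (dr (fst qrand) (fst q0))\<^sup>2"
proof -
  have "D_near_sq dr V qrand \<in> (\<lambda>q. (dr (fst qrand) (fst q))\<^sup>2) ` V"
    unfolding D_near_sq_def using assms by (intro Min_in) auto
  then show ?thesis using that by blast
qed

lemma nearest_neighbour_in_Q_near:
  assumes dr_sym: "\<And>x y. dr x y = dr y x"
    and db_nonneg: "\<And>B1 B2. db B1 B2 \<ge> 0"
    and db_bound: "\<And>B1 B2. db B1 B2 \<le> Dmaxb"
    and lam_nonneg: "lam \<ge> 0"
    and "finite V"
    and nearest: "is_arg_min (\<lambda>q. d_f dr db lam q qrand) (\<lambda>q. q \<in> V) qm"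
  shows "qm \<in> Q_near dr lam Dmaxb V qrand"
proof -
  have qm: "qm \<in> V" using nearest by (simp add: is_arg_min_def)
  then obtain q0 where q0: "q0 \<in> V" and D_near: "D_near_sq dr V qrand = (dr (fst qrand) (fst q0))\<^sup>2"
    using D_near_sq_attained[OF \<open>finite V\<close>] by blast
  have "(dr (fst qm) (fst qrand))\<^sup>2 \<le> (d_f dr db lam qm qrand)\<^sup>2"
    unfolding d_f_sq[OF lam_nonneg] using lam_nonneg by simp
  also have "\<dots> \<le> (d_f dr db lam q0 qrand)\<^sup>2"
  proof (rule power_mono)
    show "d_f dr db lam qm qrand \<le> d_f dr db lam q0 qrand"
      using nearest q0 unfolding is_arg_min_linorder by blast
    show "0 \<le> d_f dr db lam qm qrand"
      unfolding d_f_def using lam_nonneg by simp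
  qed
  also have "\<dots> \<le> (dr (fst q0) (fst qrand))\<^sup>2 + lam * Dmaxb\<^sup>2"
    unfolding d_f_sq[OF lam_nonneg]
    using mult_left_mono[OF power_mono[OF db_bound db_nonneg] lam_nonneg] by simp
  finally show ?thesis
    using qm D_near dr_sym[of "fst qrand" "fst q0"] unfolding Q_near_def D_max_f_sq_def by simp
qed

theorem lemma2:
  fixes dr :: "'r \<Rightarrow> 'r \<Rightarrow> real" and db :: "'b \<Rightarrow> 'b \<Rightarrow> real"
    and lam Dmaxb :: real and V :: "('r \<times> 'b) set" and qrand :: "'r \<times> 'b"
  assumes dr_nonneg: "\<And>x y. dr x y \<ge> 0"
    and dr_sym: "\<And>x y. dr x y = dr y x"
    and db_nonneg: "\<And>B1 B2. db B1 B2 \<ge> 0"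
    and Dmaxb_pos: "Dmaxb > 0"
    and db_bound: "\<And>B1 B2. db B1 B2 \<le> Dmaxb"
    and lam_pos: "lam > 0"
    and V_fin: "finite V" and V_ne: "V \<noteq> {}"
  shows "Q_near dr lam Dmaxb V qrand \<noteq> {} \<and>
         (\<forall>qsel. is_arg_min (\<lambda>q. d_f dr db lam q qrand) (\<lambda>q. q \<in> Q_near dr lam Dmaxb V qrand) qsel
            \<longrightarrow> d_f dr db lam qsel qrand = Min ((\<lambda>q. d_f dr db lam q qrand) ` V))"
proof -
  let ?f = "\<lambda>q. d_f dr db lam q qrand"
  let ?Q = "Q_near dr lam Dmaxb V qrand"
  obtain qm where nearest: "is_arg_min ?f (\<lambda>q. q \<in> V) qm"
    using ex_is_arg_min_if_finite[OF V_fin V_ne] by blast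
  have qm_Q: "qm \<in> ?Q"
    using nearest_neighbour_in_Q_near[OF dr_sym db_nonneg db_bound _ V_fin nearest] lam_pos
    by simp
  have "?Q \<subseteq> V" unfolding Q_near_def by auto
  then have "?f qsel = Min (?f ` V)" if "is_arg_min ?f (\<lambda>q. q \<in> ?Q) qsel" for qsel
    using is_arg_min_imp_Min_eq[OF V_fin] is_arg_min_subset[OF _ qm_Q nearest that] by blast
  with qm_Q show ?thesis by blast
qed

end
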